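(* For every $f\in C(\mathbb{CP}^1)$ and every positive integer $n$, $$\lim_{\nu\to\infty}\big\|(\nu+1)^nR_\nu\big(R_\nu^*(f)^n\big)-f^n\big\|_\infty=0.$$
   Context: For an integer $\nu\ge0$, $\mathcal{H}_\nu$ is the space of polynomials in one complex variable of degree $\le\nu$, with inner product $\langle f,g\rangle=\int_{\mathbb{C}}f\overline g\,d\iota_\nu$, $d\iota_\nu(z)=\frac{\nu+1}{(1+|z|^2)^\nu}\frac{dA(z)}{\pi(1+|z|^2)^2}$ ($dA$ Lebesgue measure). It has reproducing kernel $K^\nu(x,y)=(1+x\overline y)^\nu$; the kernel of an operator $\Gamma$ on $\mathcal{H}_\nu$ is $\Gamma(x,y):=\Gamma(K^\nu(\cdot,y))(x)$. $C(\mathbb{CP}^1)$: continuous functions on $\mathbb{C}$ extending continuously to $\infty$, sup norm. $R_\nu(\Gamma)(z)=\Gamma(z,z)/(1+|z|^2)^\nu$; for a function $f$, $R_\nu^*(f)$ is the operator on $\mathcal{H}_\nu$ with $(R_\nu^*(f)h)(x)=\frac1{\nu+1}\int_{\mathbb{C}}f(z)h(z)(1+x\overline z)^\nu d\iota_\nu(z)$ (i.e. $\frac1{\nu+1}$ times the Toeplitz operator with symbol $f$); $R_\nu^*(f)^n$ is its $n$-th power. *)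

theory Defs
  imports "HOL-Analysis.Analysis"
begin

text \<open>C(CP^1): continuous functions on the complex plane with a limit at infinity.\<close>
definition cont_CP1 :: "(complex \<Rightarrow> complex) \<Rightarrow> bool" where
  "cont_CP1 f \<longleftrightarrow> continuous_on UNIV f \<and> (\<exists>L. (f \<longlongrightarrow> L) at_infinity)"

text \<open>Density of the measure d iota_nu with respect to Lebesgue measure dA on C.\<close>
definition iota_dens :: "nat \<Rightarrow> complex \<Rightarrow> real" where
  "iota_dens \<nu> z = (real \<nu> + 1) / (1 + (cmod z)\<^sup>2) ^ \<nu> / (pi * (1 + (cmod z)\<^sup>2)\<^sup>2)"

definition Knu :: "nat \<Rightarrow> complex \<Rightarrow> complex \<Rightarrow> complex" where
  "Knu \<nu> x y = (1 + x * cnj y) ^ \<nu>"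

definition op_kernel :: "nat \<Rightarrow> ((complex \<Rightarrow> complex) \<Rightarrow> (complex \<Rightarrow> complex)) \<Rightarrow> complex \<Rightarrow> complex \<Rightarrow> complex" where
  "op_kernel \<nu> \<Gamma> x y = \<Gamma> (\<lambda>w. Knu \<nu> w y) x"

definition Rnu :: "nat \<Rightarrow> ((complex \<Rightarrow> complex) \<Rightarrow> (complex \<Rightarrow> complex)) \<Rightarrow> complex \<Rightarrow> complex" where
  "Rnu \<nu> \<Gamma> z = op_kernel \<nu> \<Gamma> z z / complex_of_real ((1 + (cmod z)\<^sup>2) ^ \<nu>)"

text \<open>R_nu^*(f): (1/(nu+1)) times the Toeplitz operator with symbol f.\<close>
definition Rnu_star :: "nat \<Rightarrow> (complex \<Rightarrow> complex) \<Rightarrow> (complex \<Rightarrow> complex) \<Rightarrow> (complex \<Rightarrow> complex)" where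
  "Rnu_star \<nu> f h = (\<lambda>x. (1 / (of_nat \<nu> + 1)) *
     (LINT z|lborel. f z * h z * (1 + x * cnj z) ^ \<nu> * complex_of_real (iota_dens \<nu> z)))"

end

theory Submission
  imports Defs
begin

text \<open>
  The quantity \<open>(\<nu> + 1)\<^sup>n R\<^sub>\<nu>(R\<^sub>\<nu>\<^sup>*(f)\<^sup>n)(z)\<close> is the normalised diagonal value
  \<open>T\<^sup>n K\<^sub>z(z) / K\<^sub>z(z)\<close> of the \<open>n\<close>-th power of the Toeplitz operator \<open>T = P\<^sub>\<nu> M\<^sub>f\<close>, where
  \<open>K\<^sub>z = K\<^sup>\<nu>(-, z)\<close> and \<open>P\<^sub>\<nu>\<close> is the orthogonal projection onto \<open>H\<^sub>\<nu>\<close> with respect to \<open>\<iota>\<^sub>\<nu>\<close>.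
  The monomials are orthogonal, \<open>\<integral> z\<^sup>j conj(z)\<^sup>k d\<iota>\<^sub>\<nu> = \<delta>\<^sub>j\<^sub>k / (\<nu> choose k)\<close>, by rotation
  invariance of Lebesgue measure and a Beta integral; hence \<open>P\<^sub>\<nu>\<close> reproduces \<open>H\<^sub>\<nu>\<close> and is a
  contraction, and \<open>\<parallel>T\<parallel> \<le> \<parallel>f\<parallel>\<^sub>\<infinity>\<close>.

  Since \<open>T K\<^sub>z = f(z) K\<^sub>z + P\<^sub>\<nu>((f - f(z)) K\<^sub>z)\<close>, a telescoping sum bounds the error by
  \<open>n \<parallel>f\<parallel>\<^sub>\<infinity>\<^sup>n \<parallel>(f - f(z)) K\<^sub>z\<parallel> / \<parallel>K\<^sub>z\<parallel>\<close>. Finally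
  \<open>|K\<^sub>z(w)|\<^sup>2 = ((1 + |z|\<^sup>2)(1 + |w|\<^sup>2) - |z - w|\<^sup>2)\<^sup>\<nu>\<close>, so the probability measure
  \<open>|K\<^sub>z|\<^sup>2 d\<iota>\<^sub>\<nu> / \<parallel>K\<^sub>z\<parallel>\<^sup>2\<close> gives mass at most \<open>(\<nu> + 1)(1 - \<delta>)\<^sup>\<nu>\<close> to the complement of
  the chordal \<open>\<delta>\<close>-neighbourhood of \<open>z\<close>, while on that neighbourhood \<open>f - f(z)\<close> is uniformly
  small because \<open>f\<close> is uniformly continuous on the Riemann sphere.
\<close>

section \<open>Rotation invariance of Lebesgue measure on the plane\<close>

lemma borel_measurable_Complex [measurable (raw)]:
  assumes [measurable]: "f \<in> borel_measurable M" "g \<in> borel_measurable M"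
  shows "(\<lambda>p. Complex (f p) (g p)) \<in> borel_measurable M"
proof -
  have "(\<lambda>p. Complex (f p) (g p)) = (\<lambda>p. complex_of_real (f p) + \<i> * complex_of_real (g p))"
    by (auto simp: complex_eq_iff)
  also have "\<dots> \<in> borel_measurable M" by measurable
  finally show ?thesis .
qed

lemma lborel_complex_eq_distr_pair:
  "(lborel :: complex measure) = distr (lborel \<Otimes>\<^sub>M lborel) borel (\<lambda>(x, y). Complex x y)"
proof (rule lborel_eqI)
  fix l u :: complex
  assume "\<And>b. b \<in> Basis \<Longrightarrow> l \<bullet> b \<le> u \<bullet> b"
  from this[of 1] this[of \<i>] have le: "Re l \<le> Re u" "Im l \<le> Im u"
    by (auto simp: Basis_complex_def)
  have "(\<lambda>(x, y). Complex x y) -` box l u \<inter> space (lborel \<Otimes>\<^sub>M lborel)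
      = {Re l<..<Re u} \<times> {Im l<..<Im u}"
    by (auto simp: box_def Basis_complex_def space_pair_measure)
  then have "emeasure (distr (lborel \<Otimes>\<^sub>M lborel) borel (\<lambda>(x, y). Complex x y)) (box l u)
      = emeasure (lborel \<Otimes>\<^sub>M lborel) ({Re l<..<Re u} \<times> {Im l<..<Im u})"
    by (subst emeasure_distr) (auto simp: case_prod_beta')
  also have "\<dots> = (\<Prod>b\<in>Basis. (u - l) \<bullet> b)"
    using le by (simp add: lborel.emeasure_pair_measure_Times Basis_complex_def ennreal_mult)
  finally show "emeasure (distr (lborel \<Otimes>\<^sub>M lborel) borel (\<lambda>(x, y). Complex x y)) (box l u)
      = (\<Prod>b\<in>Basis. (u - l) \<bullet> b)" .
qed (simp add: case_prod_beta')

lemma nn_integral_lborel_complex: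
  fixes h :: "complex \<Rightarrow> ennreal"
  assumes [measurable]: "h \<in> borel_measurable borel"
  shows "(\<integral>\<^sup>+z. h z \<partial>lborel) = (\<integral>\<^sup>+y. \<integral>\<^sup>+x. h (Complex x y) \<partial>lborel \<partial>lborel)"
    and "(\<integral>\<^sup>+z. h z \<partial>lborel) = (\<integral>\<^sup>+x. \<integral>\<^sup>+y. h (Complex x y) \<partial>lborel \<partial>lborel)"
proof -
  have m: "(\<lambda>p. h (Complex (fst p) (snd p))) \<in> borel_measurable (lborel \<Otimes>\<^sub>M lborel)"
    by measurable
  have pair: "(\<integral>\<^sup>+z. h z \<partial>lborel) = (\<integral>\<^sup>+p. h (Complex (fst p) (snd p)) \<partial>(lborel \<Otimes>\<^sub>M lborel))"
    by (subst lborel_complex_eq_distr_pair) (simp add: nn_integral_distr case_prod_beta')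
  show "(\<integral>\<^sup>+z. h z \<partial>lborel) = (\<integral>\<^sup>+y. \<integral>\<^sup>+x. h (Complex x y) \<partial>lborel \<partial>lborel)"
    using lborel_pair.nn_integral_snd[OF m] pair by simp
  show "(\<integral>\<^sup>+z. h z \<partial>lborel) = (\<integral>\<^sup>+x. \<integral>\<^sup>+y. h (Complex x y) \<partial>lborel \<partial>lborel)"
    using lborel.nn_integral_fst[OF m] pair by simp
qed

lemma distr_lborel_eqI_nn_integral:
  fixes T :: "'a::euclidean_space \<Rightarrow> 'a"
  assumes [measurable]: "T \<in> borel_measurable borel"
    and invariant: "\<And>h. h \<in> borel_measurable borel \<Longrightarrow>
      (\<integral>\<^sup>+x. h (T x) \<partial>lborel) = (\<integral>\<^sup>+x. h x \<partial>lborel)"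
  shows "distr lborel borel T = lborel"
proof (rule measure_eqI)
  fix A :: "'a set"
  assume "A \<in> sets (distr lborel borel T)"
  then have [measurable]: "A \<in> sets borel" by simp
  have "emeasure (distr lborel borel T) A = emeasure lborel (T -` A)"
    by (subst emeasure_distr) auto
  also have "\<dots> = (\<integral>\<^sup>+x. indicator (T -` A) x \<partial>lborel)"
    using measurable_sets_borel[of T borel A] by simp
  also have "\<dots> = (\<integral>\<^sup>+x. indicator A (T x) \<partial>lborel)"
    by (simp add: indicator_vimage)
  also have "\<dots> = emeasure lborel A"
    by (subst invariant) auto
  finally show "emeasure (distr lborel borel T) A = emeasure lborel A" .
qed simp

text \<open>Horizontal and vertical shears preserve Lebesgue measure (Fubini plus translation
  invariance of the inner integral); a rotation is a product of three shears.\<close>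

definition shear_re :: "real \<Rightarrow> complex \<Rightarrow> complex" where
  "shear_re a z = Complex (Re z + a * Im z) (Im z)"

definition shear_im :: "real \<Rightarrow> complex \<Rightarrow> complex" where
  "shear_im b z = Complex (Re z) (Im z + b * Re z)"

lemma shear_re_measurable [measurable]: "shear_re a \<in> borel_measurable borel"
  unfolding shear_re_def by measurable

lemma shear_im_measurable [measurable]: "shear_im b \<in> borel_measurable borel"
  unfolding shear_im_def by measurable

lemma distr_lborel_shear_re: "distr lborel borel (shear_re a) = lborel"
proof (rule distr_lborel_eqI_nn_integral)
  fix h :: "complex \<Rightarrow> ennreal"
  assume [measurable]: "h \<in> borel_measurable borel"
  have "(\<integral>\<^sup>+z. h (shear_re a z) \<partial>lborel)
      = (\<integral>\<^sup>+y. \<integral>\<^sup>+x. h (Complex (a * y + 1 * x) y) \<partial>lborel \<partial>lborel)"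
    by (subst nn_integral_lborel_complex(1)) (auto simp: shear_re_def algebra_simps)
  also have "\<dots> = (\<integral>\<^sup>+y. \<integral>\<^sup>+x. h (Complex x y) \<partial>lborel \<partial>lborel)"
    using nn_integral_real_affine[of "\<lambda>x. h (Complex x y)" 1 "a * y" for y] by simp
  finally show "(\<integral>\<^sup>+z. h (shear_re a z) \<partial>lborel) = (\<integral>\<^sup>+z. h z \<partial>lborel)"
    by (simp add: nn_integral_lborel_complex(1))
qed simp

lemma distr_lborel_shear_im: "distr lborel borel (shear_im b) = lborel"
proof (rule distr_lborel_eqI_nn_integral)
  fix h :: "complex \<Rightarrow> ennreal"
  assume [measurable]: "h \<in> borel_measurable borel"
  have "(\<integral>\<^sup>+z. h (shear_im b z) \<partial>lborel)
      = (\<integral>\<^sup>+x. \<integral>\<^sup>+y. h (Complex x (b * x + 1 * y)) \<partial>lborel \<partial>lborel)"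
    by (subst nn_integral_lborel_complex(2)) (auto simp: shear_im_def algebra_simps)
  also have "\<dots> = (\<integral>\<^sup>+x. \<integral>\<^sup>+y. h (Complex x y) \<partial>lborel \<partial>lborel)"
    using nn_integral_real_affine[of "\<lambda>y. h (Complex x y)" 1 "b * x" for x] by simp
  finally show "(\<integral>\<^sup>+z. h (shear_im b z) \<partial>lborel) = (\<integral>\<^sup>+z. h z \<partial>lborel)"
    by (simp add: nn_integral_lborel_complex(2))
qed simp

lemma mult_eq_shears:
  assumes "cmod c = 1" "Im c \<noteq> 0"
  defines "a \<equiv> (Re c - 1) / Im c"
  shows "(*) c = shear_re a \<circ> shear_im (Im c) \<circ> shear_re a"
proof
  fix z
  have unit: "(Re c)\<^sup>2 + (Im c)\<^sup>2 = 1"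
    using assms(1) by (simp add: cmod_def)
  have re: "Re c = 1 + a * Im c"
    using assms(2) by (simp add: a_def)
  have "a + a * Re c = ((Re c)\<^sup>2 - 1) / Im c"
    using assms(2) by (simp add: a_def field_simps power2_eq_square)
  also have "(Re c)\<^sup>2 - 1 = - (Im c)\<^sup>2"
    using unit by linarith
  also have "- (Im c)\<^sup>2 / Im c = - Im c"
    using assms(2) by (simp add: power2_eq_square)
  finally have im: "- Im c = a + a * (1 + a * Im c)"
    by (simp add: re)
  have "c * z = Complex (Re c * Re z + (- Im c) * Im z) (Im c * Re z + Re c * Im z)"
    by (simp add: complex_eq_iff)
  also have "\<dots> = Complex ((1 + a * Im c) * Re z + (a + a * (1 + a * Im c)) * Im z)
      (Im c * Re z + (1 + a * Im c) * Im z)"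
    unfolding im by (simp add: re)
  also have "\<dots> = (shear_re a \<circ> shear_im (Im c) \<circ> shear_re a) z"
    by (simp add: shear_re_def shear_im_def algebra_simps)
  finally show "c * z = (shear_re a \<circ> shear_im (Im c) \<circ> shear_re a) z" .
qed

lemma distr_lborel_mult_unimodular:
  assumes "cmod c = 1"
  shows "distr lborel borel ((*) c) = lborel"
proof -
  have distr_comp: "distr lborel borel (f \<circ> g) = distr (distr lborel borel g) borel f"
    if [measurable]: "f \<in> borel_measurable borel" "g \<in> borel_measurable borel"
    for f g :: "complex \<Rightarrow> complex"
    by (subst distr_distr) auto
  have rotation: "distr lborel borel ((*) c) = lborel" if "cmod c = 1" "Im c \<noteq> 0" for c
    unfolding mult_eq_shears[OF that]
    by (simp add: distr_comp distr_lborel_shear_re distr_lborel_shear_im)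
  show ?thesis
  proof (cases "Im c = 0")
    case True
    then have "c = 1 \<or> c = \<i> * \<i>"
      using assms by (auto simp: complex_eq_iff cmod_def)
    then show ?thesis
    proof (elim disjE)
      assume "c = \<i> * \<i>"
      then have "(*) c = (*) \<i> \<circ> (*) \<i>" by auto
      then show ?thesis
        by (simp add: distr_comp rotation)
    next
      assume "c = 1"
      then have "(*) c = (\<lambda>z. z)" by auto
      then show ?thesis by (simp add: distr_id2)
    qed
  qed (use assms rotation in auto)
qed

lemma lborel_integral_mult_unimodular:
  fixes F :: "complex \<Rightarrow> 'b::{banach, second_countable_topology}"
  assumes "cmod c = 1" and [measurable]: "F \<in> borel_measurable borel"
  shows "(\<integral>z. F (c * z) \<partial>lborel) = integral\<^sup>L lborel F"
  by (subst (2) distr_lborel_mult_unimodular[OF assms(1), symmetric]) (simp add: integral_distr)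

section \<open>Radial integrals and the moments of \<open>\<iota>\<^sub>\<nu>\<close>\<close>

definition bracket :: "complex \<Rightarrow> real" where
  "bracket z = 1 + (cmod z)\<^sup>2"

lemma bracket_ge_1: "bracket z \<ge> 1"
  by (simp add: bracket_def)

lemma bracket_pos: "bracket z > 0"
  using bracket_ge_1[of z] by linarith

lemma cnj_measurable [measurable]: "cnj \<in> borel_measurable borel"
  by (intro borel_measurable_continuous_onI continuous_intros)

lemma bracket_measurable [measurable]: "bracket \<in> borel_measurable borel"
  unfolding bracket_def by measurable

lemma norm_one_plus_mult_cnj_sq: "(cmod (1 + z * cnj w))\<^sup>2 + (cmod (z - w))\<^sup>2 = bracket z * bracket w"
  unfolding bracket_def cmod_power2 by (simp add: power2_eq_square algebra_simps)

lemma emeasure_distr_bracket_atMost: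
  "emeasure (distr lborel borel bracket) {..a} = ennreal (pi * max 0 (a - 1))"
proof (cases "a \<ge> 1")
  case True
  have "bracket -` {..a} = cball 0 (sqrt (a - 1))"
  proof (intro set_eqI iffI)
    fix x :: complex
    assume "x \<in> cball 0 (sqrt (a - 1))"
    then have "(cmod x)\<^sup>2 \<le> (sqrt (a - 1))\<^sup>2"
      by (intro power_mono) auto
    then show "x \<in> bracket -` {..a}"
      using True by (simp add: bracket_def)
  qed (use True in \<open>auto simp: bracket_def real_le_rsqrt\<close>)
  then have "emeasure (distr lborel borel bracket) {..a} = emeasure lborel (cball (0::complex) (sqrt (a - 1)))"
    by (subst emeasure_distr) auto
  also have "\<dots> = ennreal (pi * max 0 (a - 1))"
    using True by (simp add: emeasure_cball unit_ball_vol_2)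
  finally show ?thesis .
next
  case False
  then have "bracket -` {..a} = {}"
    using bracket_ge_1 by (auto intro: order.trans)
  then show ?thesis
    using False by (subst emeasure_distr) auto
qed

lemma distr_lborel_bracket:
  "distr lborel borel bracket = density lborel (\<lambda>s. ennreal (pi * indicator {1..} s))"
proof (rule measure_eqI_generator_eq[where E="range atMost" and \<Omega>=UNIV and A="\<lambda>i. {..real i}"])
  have density_atMost:
    "emeasure (density lborel (\<lambda>s::real. ennreal (pi * indicator {1..} s))) {..a} = ennreal (pi * max 0 (a - 1))"
    for a
  proof -
    have "emeasure (density lborel (\<lambda>s::real. ennreal (pi * indicator {1..} s))) {..a}
        = (\<integral>\<^sup>+s. ennreal pi * indicator {1..a} s \<partial>lborel)"
      by (subst emeasure_density) (auto intro!: nn_integral_cong split: split_indicator)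
    also have "\<dots> = ennreal (pi * max 0 (a - 1))"
      by (subst nn_integral_cmult) (auto simp: ennreal_mult max_def)
    finally show ?thesis .
  qed
  show "Int_stable (range atMost :: real set set)"
    by (auto simp: Int_stable_def)
  have borel: "sets (borel :: real measure) = sigma_sets UNIV (range atMost)"
    by (subst borel_eq_atMost) (simp add: sets_measure_of)
  show "sets (distr lborel borel bracket) = sigma_sets UNIV (range atMost)"
    using borel by simp
  show "sets (density lborel (\<lambda>s::real. ennreal (pi * indicator {1..} s))) = sigma_sets UNIV (range atMost)"
    using borel by simp
  show "emeasure (distr lborel borel bracket) X
      = emeasure (density lborel (\<lambda>s::real. ennreal (pi * indicator {1..} s))) X"
    if "X \<in> range atMost" for X
    using that by (auto simp: emeasure_distr_bracket_atMost density_atMost)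
  show "emeasure (distr lborel borel bracket) {..real i} \<noteq> \<infinity>" for i
    by (simp add: emeasure_distr_bracket_atMost)
qed (auto intro: real_nat_ceiling_ge)

lemma
  fixes G :: "real \<Rightarrow> real"
  assumes [measurable]: "G \<in> borel_measurable borel"
    and nonneg: "\<And>s. s \<ge> 1 \<Longrightarrow> G s \<ge> 0" and I: "(G has_integral I) {1..}"
  shows integrable_bracket_comp: "integrable lborel (\<lambda>z. G (bracket z))"
    and integral_bracket_comp: "(\<integral>z. G (bracket z) \<partial>lborel) = pi * I"
proof -
  have AE_nonneg: "AE s in lborel. 0 \<le> pi * indicator {1..} s * G s"
    using nonneg by (auto simp: indicator_def)
  have I_nonneg: "I \<ge> 0"
    using has_integral_nonneg[OF I] nonneg by auto
  have "(\<integral>\<^sup>+s. ennreal (pi * indicator {1..} s * G s) \<partial>lborel)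
      = ennreal pi * (\<integral>\<^sup>+s. ennreal (indicator {1..} s * G s) \<partial>lborel)"
    by (simp add: mult.assoc ennreal_mult' nn_integral_cmult)
  also have "(\<integral>\<^sup>+s. ennreal (indicator {1..} s * G s) \<partial>lborel) = ennreal I"
    using nn_integral_has_integral_lebesgue[OF _ I] nonneg by auto
  finally have nn: "(\<integral>\<^sup>+s. ennreal (pi * indicator {1..} s * G s) \<partial>lborel) = ennreal (pi * I)"
    using I_nonneg by (simp add: ennreal_mult)
  have int: "integrable lborel (\<lambda>s. (pi * indicator {1..} s) *\<^sub>R G s)"
    by (rule integrableI_nonneg) (use AE_nonneg nn in auto)
  have int_eq: "(\<integral>s. (pi * indicator {1..} s) *\<^sub>R G s \<partial>lborel) = pi * I"
    by (subst integral_eq_nn_integral) (use AE_nonneg nn I_nonneg in auto)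
  have "integrable (density lborel (\<lambda>s. ennreal (pi * indicator {1..} s))) G"
    by (subst integrable_density) (use int in auto)
  then show "integrable lborel (\<lambda>z. G (bracket z))"
    unfolding distr_lborel_bracket[symmetric] by (subst (asm) integrable_distr_eq) auto
  have "integral\<^sup>L (density lborel (\<lambda>s. ennreal (pi * indicator {1..} s))) G = pi * I"
    by (subst integral_density) (use int_eq in auto)
  then show "(\<integral>z. G (bracket z) \<partial>lborel) = pi * I"
    unfolding distr_lborel_bracket[symmetric] by (subst (asm) integral_distr) auto
qed

text \<open>After the substitution \<open>s = 1/t\<close> this is the Beta integral \<open>B(k + 1, r + 1)\<close>.\<close>

lemma has_integral_beta_ge_one:
  "((\<lambda>s::real. (s - 1) ^ k / s ^ (k + r + 2)) has_integral fact k * fact r / fact (k + r + 1)) {1..}"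
proof (induction k arbitrary: r)
  case 0
  have "((\<lambda>s::real. 1 / s ^ (r + 2)) has_integral 1 / (real (r + 2 - 1) * 1 ^ (r + 2 - 1))) {1..}"
    by (rule has_integral_inverse_power_to_inf) auto
  then show ?case
    by (simp add: add.commute)
next
  case (Suc k)
  have step: "a * b / F - a * ((real r + 1) * b) / ((real k + real r + 2) * F)
      = (real k + 1) * a * b / ((real k + real r + 2) * F)" for a b F :: real
  proof -
    have "a * b / F - a * ((real r + 1) * b) / ((real k + real r + 2) * F)
        = ((real k + real r + 2) * (a * b) - (real r + 1) * (a * b)) / ((real k + real r + 2) * F)"
      by (simp add: diff_divide_distrib)
    also have "\<dots> = (real k + 1) * a * b / ((real k + real r + 2) * F)"
      by (simp add: algebra_simps)
    finally show ?thesis .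
  qed
  have fact_eqs: "fact (Suc k) = (real k + 1) * fact k" "fact (Suc r) = (real r + 1) * fact r"
    "fact (k + Suc r + 1) = (real k + real r + 2) * fact (k + r + 1)"
    "fact (Suc k + r + 1) = (real k + real r + 2) * fact (k + r + 1)"
    by (simp_all add: algebra_simps)
  have recurrence: "fact k * fact r / fact (k + r + 1) - fact k * fact (Suc r) / fact (k + Suc r + 1)
      = (fact (Suc k) * fact r / fact (Suc k + r + 1) :: real)"
    unfolding fact_eqs by (rule step)
  have "((\<lambda>s::real. (s - 1) ^ k / s ^ (k + r + 2) - (s - 1) ^ k / s ^ (k + Suc r + 2))
      has_integral fact (Suc k) * fact r / fact (Suc k + r + 1)) {1..}"
    unfolding recurrence[symmetric] by (intro has_integral_diff Suc.IH)
  then show ?case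
    by (rule has_integral_eq[rotated]) (auto simp: field_simps)
qed

lemma iota_dens_eq: "iota_dens \<nu> z = (real \<nu> + 1) / (pi * bracket z ^ (\<nu> + 2))"
  by (simp add: iota_dens_def bracket_def power_add divide_divide_eq_left ac_simps power2_eq_square)

lemma iota_dens_nonneg: "iota_dens \<nu> z \<ge> 0"
  unfolding iota_dens_eq using bracket_pos[of z] by (intro divide_nonneg_pos) auto

lemma iota_dens_measurable [measurable]: "iota_dens \<nu> \<in> borel_measurable borel"
  unfolding iota_dens_def by measurable

lemma bracket_power_iota_dens: "bracket z ^ \<nu> * iota_dens \<nu> z = (real \<nu> + 1) / pi * (1 / (bracket z)\<^sup>2)"
proof -
  have "bracket z ^ (\<nu> + 2) = bracket z ^ \<nu> * (bracket z)\<^sup>2"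
    by (simp add: power_add power2_eq_square)
  then show ?thesis
    using bracket_pos[of z] by (simp add: iota_dens_eq)
qed

lemma
  shows integrable_bracket_power_iota: "integrable lborel (\<lambda>z. bracket z ^ \<nu> * iota_dens \<nu> z)"
    and integral_bracket_power_iota: "(\<integral>z. bracket z ^ \<nu> * iota_dens \<nu> z \<partial>lborel) = real \<nu> + 1"
proof -
  have "((\<lambda>s::real. 1 / s\<^sup>2) has_integral 1) {1..}"
    using has_integral_beta_ge_one[of 0 0] by (simp add: power2_eq_square)
  then have "((\<lambda>s. (real \<nu> + 1) / pi * (1 / s\<^sup>2)) has_integral (real \<nu> + 1) / pi * 1) {1..}"
    by (rule has_integral_mult_right)
  from integrable_bracket_comp[OF _ _ this] integral_bracket_comp[OF _ _ this] show
    "integrable lborel (\<lambda>z. bracket z ^ \<nu> * iota_dens \<nu> z)"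
    "(\<integral>z. bracket z ^ \<nu> * iota_dens \<nu> z \<partial>lborel) = real \<nu> + 1"
    by (simp_all add: bracket_power_iota_dens)
qed

lemma integrable_iota_dens_weighted:
  fixes g :: "complex \<Rightarrow> 'b::{banach, second_countable_topology, real_normed_algebra_1}"
  assumes [measurable]: "g \<in> borel_measurable borel" and bound: "\<And>z. norm (g z) \<le> C * bracket z ^ \<nu>"
  shows "integrable lborel (\<lambda>z. g z * of_real (iota_dens \<nu> z))"
proof (rule Bochner_Integration.integrable_bound)
  show "integrable lborel (\<lambda>z. C * (bracket z ^ \<nu> * iota_dens \<nu> z))"
    by (intro integrable_mult_right integrable_bracket_power_iota)
  show "AE z in lborel. norm (g z * of_real (iota_dens \<nu> z)) \<le> norm (C * (bracket z ^ \<nu> * iota_dens \<nu> z))"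
  proof (rule AE_I2)
    fix z
    have "norm (g z * of_real (iota_dens \<nu> z)) \<le> norm (g z) * iota_dens \<nu> z"
      using norm_mult_ineq[of "g z" "of_real (iota_dens \<nu> z)"] iota_dens_nonneg[of \<nu> z] by simp
    also have "\<dots> \<le> C * bracket z ^ \<nu> * iota_dens \<nu> z"
      by (rule mult_right_mono[OF bound iota_dens_nonneg])
    finally show "norm (g z * of_real (iota_dens \<nu> z)) \<le> norm (C * (bracket z ^ \<nu> * iota_dens \<nu> z))"
      by (simp add: mult.assoc)
  qed
qed measurable

lemma iota_moment_diag:
  assumes "k \<le> \<nu>"
  shows "(\<integral>z. (cmod z) ^ (2 * k) * iota_dens \<nu> z \<partial>lborel) = 1 / real (\<nu> choose k)"
proof -
  define r where "r = \<nu> - k"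
  have \<nu>: "\<nu> = k + r"
    using assms by (simp add: r_def)
  have pointwise: "(cmod z) ^ (2 * k) * iota_dens \<nu> z
      = (real \<nu> + 1) / pi * ((bracket z - 1) ^ k / bracket z ^ (k + r + 2))" for z
    by (simp add: iota_dens_eq bracket_def power_mult \<nu>)
  have "(\<integral>z. (cmod z) ^ (2 * k) * iota_dens \<nu> z \<partial>lborel)
      = (real \<nu> + 1) / pi * (\<integral>z. (bracket z - 1) ^ k / bracket z ^ (k + r + 2) \<partial>lborel)"
    by (simp only: pointwise integral_mult_right_zero)
  also have "\<dots> = (real \<nu> + 1) / pi * (pi * (fact k * fact r / fact (k + r + 1)))"
    by (subst integral_bracket_comp[OF _ _ has_integral_beta_ge_one]) auto
  also have "\<dots> = fact k * fact r / fact \<nu>"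
  proof -
    have "fact (k + r + 1) = (real \<nu> + 1) * fact \<nu>"
      by (simp add: \<nu>)
    then show ?thesis
      by simp
  qed
  also have "\<dots> = 1 / real (\<nu> choose k)"
    by (simp add: binomial_fact[OF assms] r_def)
  finally show ?thesis .
qed

lemma iota_moment_offdiag:
  assumes "j \<noteq> k"
  shows "(\<integral>z. z ^ j * cnj z ^ k * of_real (iota_dens \<nu> z) \<partial>lborel) = 0"
proof -
  define F where "F z = z ^ j * cnj z ^ k * of_real (iota_dens \<nu> z)" for z
  have [measurable]: "F \<in> borel_measurable borel"
    unfolding F_def by measurable
  define c where "c = cis (pi / (real j - real k))"
  have "real j - real k \<noteq> 0"
    using assms by simp
  have "c ^ j * cnj c ^ k = cis ((real j - real k) * (pi / (real j - real k)))"
    unfolding c_def cis_cnj Complex.DeMoivre cis_mult by (simp add: left_diff_distrib diff_divide_distrib)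
  also have "\<dots> = -1"
    using \<open>real j - real k \<noteq> 0\<close> by simp
  finally have "c ^ j * cnj c ^ k = -1" .
  then have rotate: "F (c * z) = - F z" for z
    by (simp add: F_def c_def iota_dens_def norm_mult power_mult_distrib mult_ac)
  have "integral\<^sup>L lborel F = (\<integral>z. F (c * z) \<partial>lborel)"
    by (rule lborel_integral_mult_unimodular[symmetric]) (auto simp: c_def F_def)
  also have "\<dots> = - integral\<^sup>L lborel F"
    by (simp add: rotate)
  finally show ?thesis
    by (simp add: F_def[abs_def])
qed

lemma iota_moment:
  assumes "k \<le> \<nu>"
  shows "(\<integral>z. z ^ j * cnj z ^ k * of_real (iota_dens \<nu> z) \<partial>lborel)
       = (if j = k then 1 / of_nat (\<nu> choose k) else 0)"
proof (cases "j = k")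
  case True
  have power_cnj: "z ^ k * cnj z ^ k = of_real ((cmod z) ^ (2 * k))" for z
  proof -
    have "z * cnj z = of_real ((cmod z)\<^sup>2)"
      by (metis complex_norm_square of_real_power)
    then show ?thesis
      by (simp add: power_mult_distrib[symmetric] power_mult)
  qed
  have "(\<integral>z. z ^ j * cnj z ^ k * of_real (iota_dens \<nu> z) \<partial>lborel)
      = (\<integral>z. of_real ((cmod z) ^ (2 * k) * iota_dens \<nu> z) \<partial>lborel)"
    unfolding True power_cnj by simp
  also have "\<dots> = of_real (\<integral>z. (cmod z) ^ (2 * k) * iota_dens \<nu> z \<partial>lborel)"
    by (rule integral_complex_of_real)
  finally show ?thesis
    using True by (simp add: iota_moment_diag[OF assms])
qed (simp add: iota_moment_offdiag)

section \<open>The space \<open>H\<^sub>\<nu>\<close> and the projection onto it\<close>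

text \<open>A substitute for \<open>L\<^sup>2(\<iota>\<^sub>\<nu>)\<close>: it contains \<open>H\<^sub>\<nu>\<close>, is stable under bounded multipliers,
  and the product of two of its members is \<open>\<iota>\<^sub>\<nu>\<close>-integrable.\<close>

definition poly_growth :: "nat \<Rightarrow> (complex \<Rightarrow> complex) \<Rightarrow> bool" where
  "poly_growth \<nu> u \<longleftrightarrow> u \<in> borel_measurable borel \<and> (\<exists>C. \<forall>z. cmod (u z) \<le> C * sqrt (bracket z) ^ \<nu>)"

lemma poly_growth_measurable: "poly_growth \<nu> u \<Longrightarrow> u \<in> borel_measurable borel"
  by (simp add: poly_growth_def)

lemma poly_growth_add: "poly_growth \<nu> u \<Longrightarrow> poly_growth \<nu> v \<Longrightarrow> poly_growth \<nu> (\<lambda>z. u z + v z)"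
  unfolding poly_growth_def
proof (elim conjE exE, intro conjI exI allI)
  fix C\<^sub>u C\<^sub>v z
  assume "\<forall>z. cmod (u z) \<le> C\<^sub>u * sqrt (bracket z) ^ \<nu>" "\<forall>z. cmod (v z) \<le> C\<^sub>v * sqrt (bracket z) ^ \<nu>"
  then show "cmod (u z + v z) \<le> (C\<^sub>u + C\<^sub>v) * sqrt (bracket z) ^ \<nu>"
    using norm_triangle_ineq[of "u z" "v z"] by (simp add: distrib_right add_mono order_trans)
qed auto

lemma poly_growth_mult_bounded:
  assumes "poly_growth \<nu> u" "f \<in> borel_measurable borel" "\<And>z. cmod (f z) \<le> M"
  shows "poly_growth \<nu> (\<lambda>z. f z * u z)"
  using assms(1) unfolding poly_growth_def
proof (elim conjE exE, intro conjI exI allI)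
  fix C z
  assume "\<forall>z. cmod (u z) \<le> C * sqrt (bracket z) ^ \<nu>"
  then have "cmod (f z) * cmod (u z) \<le> M * (C * sqrt (bracket z) ^ \<nu>)"
    using assms(3) norm_ge_zero order_trans by (intro mult_mono) blast+
  then show "cmod (f z * u z) \<le> (M * C) * sqrt (bracket z) ^ \<nu>"
    by (simp add: norm_mult ac_simps)
qed (use assms(2) in measurable)

lemma poly_growth_cmult: "poly_growth \<nu> u \<Longrightarrow> poly_growth \<nu> (\<lambda>z. c * u z)"
  using poly_growth_mult_bounded[of \<nu> u "\<lambda>_. c" "cmod c"] by simp

lemma poly_growth_sum:
  "finite A \<Longrightarrow> (\<And>i. i \<in> A \<Longrightarrow> poly_growth \<nu> (f i)) \<Longrightarrow> poly_growth \<nu> (\<lambda>z. \<Sum>i\<in>A. f i z)"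
proof (induction A rule: finite_induct)
  case empty
  then show ?case
    by (auto simp: poly_growth_def intro!: exI[of _ 0])
qed (simp add: poly_growth_add)

lemma poly_growth_power: "k \<le> \<nu> \<Longrightarrow> poly_growth \<nu> (\<lambda>z. z ^ k)"
  unfolding poly_growth_def
proof (intro conjI exI allI)
  fix z :: complex
  assume "k \<le> \<nu>"
  have "cmod z \<le> sqrt (bracket z)"
    by (rule real_le_rsqrt) (simp add: bracket_def)
  then have "cmod (z ^ k) \<le> sqrt (bracket z) ^ k"
    by (simp add: norm_power power_mono)
  also have "\<dots> \<le> sqrt (bracket z) ^ \<nu>"
    using \<open>k \<le> \<nu>\<close> bracket_ge_1[of z] by (intro power_increasing) auto
  finally show "cmod (z ^ k) \<le> 1 * sqrt (bracket z) ^ \<nu>"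
    by simp
qed measurable

lemma integrable_iota_inner:
  assumes "poly_growth \<nu> u" "poly_growth \<nu> v"
  shows "integrable lborel (\<lambda>z. u z * cnj (v z) * of_real (iota_dens \<nu> z))"
proof -
  obtain C\<^sub>u C\<^sub>v where
    C\<^sub>u: "\<And>z. cmod (u z) \<le> C\<^sub>u * sqrt (bracket z) ^ \<nu>" and
    C\<^sub>v: "\<And>z. cmod (v z) \<le> C\<^sub>v * sqrt (bracket z) ^ \<nu>"
    using assms by (auto simp: poly_growth_def)
  have [measurable]: "u \<in> borel_measurable borel" "v \<in> borel_measurable borel"
    using assms by (simp_all add: poly_growth_measurable)
  show ?thesis
  proof (rule integrable_iota_dens_weighted[where C="C\<^sub>u * C\<^sub>v"])
    fix z
    have "0 \<le> C\<^sub>u * sqrt (bracket z) ^ \<nu>"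
      using order_trans[OF norm_ge_zero C\<^sub>u[of z]] .
    then have "cmod (u z) * cmod (v z) \<le> (C\<^sub>u * sqrt (bracket z) ^ \<nu>) * (C\<^sub>v * sqrt (bracket z) ^ \<nu>)"
      by (intro mult_mono C\<^sub>u C\<^sub>v) auto
    also have "\<dots> = C\<^sub>u * C\<^sub>v * bracket z ^ \<nu>"
      using bracket_pos[of z] by (simp add: power_mult_distrib[symmetric] mult_ac)
    finally show "norm (u z * cnj (v z)) \<le> C\<^sub>u * C\<^sub>v * bracket z ^ \<nu>"
      by (simp add: norm_mult)
  qed measurable
qed

lemma integrable_iota_norm_mult:
  assumes "poly_growth \<nu> u" "poly_growth \<nu> v"
  shows "integrable lborel (\<lambda>z. cmod (u z) * cmod (v z) * iota_dens \<nu> z)"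
  using integrable_norm[OF integrable_iota_inner[OF assms]]
  by (simp add: norm_mult iota_dens_nonneg)

definition iota_inner :: "nat \<Rightarrow> (complex \<Rightarrow> complex) \<Rightarrow> (complex \<Rightarrow> complex) \<Rightarrow> complex" where
  "iota_inner \<nu> u v = (\<integral>z. u z * cnj (v z) * of_real (iota_dens \<nu> z) \<partial>lborel)"

definition iota_norm2 :: "nat \<Rightarrow> (complex \<Rightarrow> complex) \<Rightarrow> real" where
  "iota_norm2 \<nu> u = (\<integral>z. (cmod (u z))\<^sup>2 * iota_dens \<nu> z \<partial>lborel)"

lemma iota_norm2_nonneg: "iota_norm2 \<nu> u \<ge> 0"
  unfolding iota_norm2_def by (intro integral_nonneg_AE AE_I2 mult_nonneg_nonneg iota_dens_nonneg) auto

lemma iota_inner_self: "iota_inner \<nu> u u = of_real (iota_norm2 \<nu> u)"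
proof -
  have "u z * cnj (u z) = of_real ((cmod (u z))\<^sup>2)" for z
    by (metis complex_norm_square of_real_power)
  then show ?thesis
    unfolding iota_inner_def iota_norm2_def by (simp flip: integral_complex_of_real)
qed

lemma iota_inner_add_mult_left:
  assumes "poly_growth \<nu> u" "poly_growth \<nu> v" "poly_growth \<nu> w"
  shows "iota_inner \<nu> (\<lambda>z. u z + c * v z) w = iota_inner \<nu> u w + c * iota_inner \<nu> v w"
proof -
  have "iota_inner \<nu> (\<lambda>z. u z + c * v z) w = (\<integral>z. u z * cnj (w z) * of_real (iota_dens \<nu> z)
      + c * (v z * cnj (w z) * of_real (iota_dens \<nu> z)) \<partial>lborel)"
    unfolding iota_inner_def by (simp add: algebra_simps)
  also have "\<dots> = iota_inner \<nu> u w + c * iota_inner \<nu> v w"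
    using integrable_iota_inner[OF assms(1,3)] integrable_iota_inner[OF assms(2,3)]
    unfolding iota_inner_def by simp
  finally show ?thesis .
qed

lemma quadratic_nonneg_imp_discriminant:
  fixes a b c :: real
  assumes "\<And>t. 0 \<le> t\<^sup>2 * a - 2 * t * b + c" "a \<ge> 0" "b \<ge> 0"
  shows "b\<^sup>2 \<le> a * c"
proof (cases "a = 0")
  case True
  show ?thesis
  proof (rule ccontr)
    assume "\<not> b\<^sup>2 \<le> a * c"
    then have "b > 0"
      using True assms(3) by auto
    with True assms(1)[of "(c + 1) / (2 * b)"] show False
      by (simp add: field_simps)
  qed
next
  case False
  with assms(2) have "a > 0" by simp
  have "0 \<le> (b / a)\<^sup>2 * a - 2 * (b / a) * b + c"
    by (rule assms(1))
  also have "\<dots> = c - b\<^sup>2 / a"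
    using \<open>a > 0\<close> by (simp add: field_simps power2_eq_square)
  finally show ?thesis
    using \<open>a > 0\<close> by (simp add: field_simps mult.commute)
qed

lemma norm_iota_inner_le:
  assumes u: "poly_growth \<nu> u" and v: "poly_growth \<nu> v"
  shows "(cmod (iota_inner \<nu> u v))\<^sup>2 \<le> iota_norm2 \<nu> u * iota_norm2 \<nu> v"
proof -
  define b where "b = (\<integral>z. cmod (u z) * cmod (v z) * iota_dens \<nu> z \<partial>lborel)"
  have "cmod (iota_inner \<nu> u v) \<le> (\<integral>z. norm (u z * cnj (v z) * of_real (iota_dens \<nu> z)) \<partial>lborel)"
    unfolding iota_inner_def by (rule integral_norm_bound)
  also have "\<dots> = b"
    by (simp add: b_def norm_mult iota_dens_nonneg)
  finally have inner_le: "cmod (iota_inner \<nu> u v) \<le> b" .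
  then have "b \<ge> 0"
    using norm_ge_zero order_trans by blast
  have "0 \<le> t\<^sup>2 * iota_norm2 \<nu> u - 2 * t * b + iota_norm2 \<nu> v" for t
  proof -
    have "0 \<le> (\<integral>z. (t * cmod (u z) - cmod (v z))\<^sup>2 * iota_dens \<nu> z \<partial>lborel)"
      by (intro integral_nonneg_AE AE_I2 mult_nonneg_nonneg iota_dens_nonneg) auto
    also have "\<dots> = (\<integral>z. t\<^sup>2 * (cmod (u z) * cmod (u z) * iota_dens \<nu> z)
        - 2 * t * (cmod (u z) * cmod (v z) * iota_dens \<nu> z)
        + cmod (v z) * cmod (v z) * iota_dens \<nu> z \<partial>lborel)"
      by (simp add: power2_eq_square algebra_simps)
    also have "\<dots> = t\<^sup>2 * iota_norm2 \<nu> u - 2 * t * b + iota_norm2 \<nu> v"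
      using integrable_iota_norm_mult[OF u u] integrable_iota_norm_mult[OF u v]
        integrable_iota_norm_mult[OF v v]
      by (simp add: iota_norm2_def b_def power2_eq_square)
    finally show ?thesis .
  qed
  then have "b\<^sup>2 \<le> iota_norm2 \<nu> u * iota_norm2 \<nu> v"
    using \<open>b \<ge> 0\<close> by (intro quadratic_nonneg_imp_discriminant iota_norm2_nonneg)
  moreover have "(cmod (iota_inner \<nu> u v))\<^sup>2 \<le> b\<^sup>2"
    using inner_le by (intro power_mono) auto
  ultimately show ?thesis
    by linarith
qed

text \<open>Elements of \<open>H\<^sub>\<nu>\<close>, given by their coefficients.\<close>

definition poly_upto :: "nat \<Rightarrow> (nat \<Rightarrow> complex) \<Rightarrow> complex \<Rightarrow> complex" where
  "poly_upto \<nu> a x = (\<Sum>k\<le>\<nu>. a k * x ^ k)"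

lemma poly_growth_poly_upto: "poly_growth \<nu> (poly_upto \<nu> a)"
  unfolding poly_upto_def[abs_def] by (intro poly_growth_sum poly_growth_cmult poly_growth_power) auto

lemma poly_upto_cong: "(\<And>k. k \<le> \<nu> \<Longrightarrow> a k = b k) \<Longrightarrow> poly_upto \<nu> a = poly_upto \<nu> b"
  unfolding poly_upto_def by (intro ext sum.cong) auto

lemma Knu_eq_poly_upto: "(\<lambda>z. Knu \<nu> z w) = poly_upto \<nu> (\<lambda>k. of_nat (\<nu> choose k) * cnj w ^ k)"
proof
  fix z
  have "Knu \<nu> z w = (z * cnj w + 1) ^ \<nu>"
    by (simp add: Knu_def add.commute)
  also have "\<dots> = (\<Sum>k\<le>\<nu>. of_nat (\<nu> choose k) * (z * cnj w) ^ k * 1 ^ (\<nu> - k))"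
    by (rule binomial_ring)
  finally show "Knu \<nu> z w = poly_upto \<nu> (\<lambda>k. of_nat (\<nu> choose k) * cnj w ^ k) z"
    by (simp add: poly_upto_def power_mult_distrib mult_ac)
qed

lemma poly_growth_Knu: "poly_growth \<nu> (\<lambda>z. Knu \<nu> z w)"
  unfolding Knu_eq_poly_upto by (rule poly_growth_poly_upto)

lemma Knu_diag: "Knu \<nu> w w = of_real (bracket w ^ \<nu>)"
  by (simp add: Knu_def bracket_def complex_norm_square[symmetric])

lemma iota_inner_poly_upto_right:
  assumes "poly_growth \<nu> u"
  shows "iota_inner \<nu> u (poly_upto \<nu> b) = (\<Sum>k\<le>\<nu>. cnj (b k) * iota_inner \<nu> u (\<lambda>z. z ^ k))"
proof -
  have "iota_inner \<nu> u (poly_upto \<nu> b)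
      = (\<integral>z. (\<Sum>k\<le>\<nu>. cnj (b k) * (u z * cnj (z ^ k) * of_real (iota_dens \<nu> z))) \<partial>lborel)"
    unfolding iota_inner_def poly_upto_def
    by (simp add: sum_distrib_left sum_distrib_right mult_ac)
  also have "\<dots> = (\<Sum>k\<le>\<nu>. cnj (b k) * iota_inner \<nu> u (\<lambda>z. z ^ k))"
    using integrable_iota_inner[OF assms poly_growth_power]
    by (simp add: iota_inner_def)
  finally show ?thesis .
qed

lemma iota_inner_poly_upto_power:
  assumes "k \<le> \<nu>"
  shows "iota_inner \<nu> (poly_upto \<nu> a) (\<lambda>z. z ^ k) = a k / of_nat (\<nu> choose k)"
proof -
  have "iota_inner \<nu> (poly_upto \<nu> a) (\<lambda>z. z ^ k)
      = (\<integral>z. (\<Sum>j\<le>\<nu>. a j * (z ^ j * cnj z ^ k * of_real (iota_dens \<nu> z))) \<partial>lborel)"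
    unfolding iota_inner_def poly_upto_def by (simp add: sum_distrib_right mult.assoc)
  also have "\<dots> = (\<Sum>j\<le>\<nu>. a j * (if j = k then 1 / of_nat (\<nu> choose k) else 0))"
    using integrable_iota_inner[OF poly_growth_power poly_growth_power[OF assms]]
    by (simp add: iota_moment[OF assms])
  also have "\<dots> = a k / of_nat (\<nu> choose k)"
    using assms by (simp add: if_distrib cong: if_cong)
  finally show ?thesis .
qed

definition bergman_proj :: "nat \<Rightarrow> (complex \<Rightarrow> complex) \<Rightarrow> complex \<Rightarrow> complex" where
  "bergman_proj \<nu> u x = iota_inner \<nu> u (\<lambda>z. Knu \<nu> z x)"

lemma bergman_proj_eq_poly_upto:
  assumes "poly_growth \<nu> u"
  shows "bergman_proj \<nu> u = poly_upto \<nu> (\<lambda>k. of_nat (\<nu> choose k) * iota_inner \<nu> u (\<lambda>z. z ^ k))"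
  by (auto simp: fun_eq_iff bergman_proj_def Knu_eq_poly_upto iota_inner_poly_upto_right[OF assms]
      poly_upto_def mult_ac)

lemma poly_growth_bergman_proj: "poly_growth \<nu> u \<Longrightarrow> poly_growth \<nu> (bergman_proj \<nu> u)"
  by (simp add: bergman_proj_eq_poly_upto poly_growth_poly_upto)

lemma bergman_proj_poly_upto: "bergman_proj \<nu> (poly_upto \<nu> a) = poly_upto \<nu> a"
  by (simp add: bergman_proj_eq_poly_upto[OF poly_growth_poly_upto] iota_inner_poly_upto_power
      cong: poly_upto_cong)

lemma bergman_proj_Knu: "bergman_proj \<nu> (\<lambda>z. Knu \<nu> z w) = (\<lambda>z. Knu \<nu> z w)"
  unfolding Knu_eq_poly_upto by (rule bergman_proj_poly_upto)

lemma iota_norm2_Knu: "iota_norm2 \<nu> (\<lambda>z. Knu \<nu> z w) = bracket w ^ \<nu>"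
proof -
  have "of_real (iota_norm2 \<nu> (\<lambda>z. Knu \<nu> z w)) = bergman_proj \<nu> (\<lambda>z. Knu \<nu> z w) w"
    by (simp add: bergman_proj_def iota_inner_self)
  also have "\<dots> = of_real (bracket w ^ \<nu>)"
    by (simp add: bergman_proj_Knu Knu_diag)
  finally show ?thesis
    by (simp only: of_real_eq_iff)
qed

lemma bergman_proj_add_mult:
  assumes "poly_growth \<nu> u" "poly_growth \<nu> v"
  shows "bergman_proj \<nu> (\<lambda>z. u z + c * v z) = (\<lambda>x. bergman_proj \<nu> u x + c * bergman_proj \<nu> v x)"
  by (simp add: fun_eq_iff bergman_proj_def iota_inner_add_mult_left[OF assms poly_growth_Knu])

lemma iota_inner_bergman_proj_left:
  assumes "poly_growth \<nu> u"
  shows "iota_inner \<nu> (bergman_proj \<nu> u) (poly_upto \<nu> b) = iota_inner \<nu> u (poly_upto \<nu> b)"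
  by (simp add: iota_inner_poly_upto_right assms poly_growth_bergman_proj
      bergman_proj_eq_poly_upto[OF assms] iota_inner_poly_upto_power poly_growth_poly_upto)

lemma iota_norm2_bergman_proj_le:
  assumes "poly_growth \<nu> u"
  shows "iota_norm2 \<nu> (bergman_proj \<nu> u) \<le> iota_norm2 \<nu> u"
proof -
  obtain b where b: "bergman_proj \<nu> u = poly_upto \<nu> b"
    using bergman_proj_eq_poly_upto[OF assms] by blast
  have "of_real (iota_norm2 \<nu> (bergman_proj \<nu> u)) = iota_inner \<nu> u (bergman_proj \<nu> u)"
    using iota_inner_bergman_proj_left[OF assms, of b] by (simp add: b iota_inner_self)
  then have "(iota_norm2 \<nu> (bergman_proj \<nu> u))\<^sup>2 = (cmod (iota_inner \<nu> u (bergman_proj \<nu> u)))\<^sup>2"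
    by (metis abs_of_nonneg iota_norm2_nonneg norm_of_real)
  also have "\<dots> \<le> iota_norm2 \<nu> u * iota_norm2 \<nu> (bergman_proj \<nu> u)"
    by (intro norm_iota_inner_le assms poly_growth_bergman_proj)
  finally show ?thesis
    using iota_norm2_nonneg[of \<nu> "bergman_proj \<nu> u"]
    by (cases "iota_norm2 \<nu> (bergman_proj \<nu> u) = 0") (auto simp: power2_eq_square iota_norm2_nonneg)
qed

section \<open>Toeplitz operators\<close>

definition toeplitz :: "nat \<Rightarrow> (complex \<Rightarrow> complex) \<Rightarrow> (complex \<Rightarrow> complex) \<Rightarrow> complex \<Rightarrow> complex" where
  "toeplitz \<nu> f h = bergman_proj \<nu> (\<lambda>z. f z * h z)"

lemma toeplitz_divide: "toeplitz \<nu> f (\<lambda>z. h z / c) x = toeplitz \<nu> f h x / c"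
  by (simp add: toeplitz_def bergman_proj_def iota_inner_def)

lemma Rnu_star_eq_toeplitz: "Rnu_star \<nu> f h = (\<lambda>x. toeplitz \<nu> f h x / (of_nat \<nu> + 1))"
  by (simp add: fun_eq_iff Rnu_star_def toeplitz_def bergman_proj_def iota_inner_def Knu_def mult_ac)

lemma Rnu_star_funpow: "(Rnu_star \<nu> f ^^ n) h = (\<lambda>x. (toeplitz \<nu> f ^^ n) h x / (of_nat \<nu> + 1) ^ n)"
  by (induction n) (simp_all add: Rnu_star_eq_toeplitz toeplitz_divide mult.commute)

lemma Rnu_eq_Knu_diag: "Rnu \<nu> \<Gamma> z = \<Gamma> (\<lambda>w. Knu \<nu> w z) z / Knu \<nu> z z"
  by (simp add: Rnu_def op_kernel_def Knu_diag bracket_def)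

context
  fixes f :: "complex \<Rightarrow> complex" and M :: real
  assumes f_measurable [measurable]: "f \<in> borel_measurable borel"
    and f_bounded: "\<And>z. cmod (f z) \<le> M"
begin

lemma bound_nonneg: "M \<ge> 0"
  using order_trans[OF norm_ge_zero f_bounded] .

lemma poly_growth_toeplitz: "poly_growth \<nu> h \<Longrightarrow> poly_growth \<nu> (toeplitz \<nu> f h)"
  unfolding toeplitz_def
  by (intro poly_growth_bergman_proj poly_growth_mult_bounded[OF _ f_measurable f_bounded])

lemma poly_growth_toeplitz_funpow: "poly_growth \<nu> h \<Longrightarrow> poly_growth \<nu> ((toeplitz \<nu> f ^^ n) h)"
  by (induction n) (auto intro: poly_growth_toeplitz)

lemma poly_growth_oscillation_mult:
  "poly_growth \<nu> h \<Longrightarrow> poly_growth \<nu> (\<lambda>z. (f z - f w) * h z)"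
proof (rule poly_growth_mult_bounded)
  show "cmod (f z - f w) \<le> M + M" for z
    using norm_triangle_ineq4[of "f z" "f w"] f_bounded[of z] f_bounded[of w] by linarith
qed measurable

lemma toeplitz_add_mult:
  assumes "poly_growth \<nu> u" "poly_growth \<nu> v"
  shows "toeplitz \<nu> f (\<lambda>z. u z + c * v z) = (\<lambda>x. toeplitz \<nu> f u x + c * toeplitz \<nu> f v x)"
proof -
  have growth: "poly_growth \<nu> (\<lambda>z. f z * u z)" "poly_growth \<nu> (\<lambda>z. f z * v z)"
    using assms by (simp_all add: poly_growth_mult_bounded[OF _ f_measurable f_bounded])
  have "toeplitz \<nu> f (\<lambda>z. u z + c * v z) = bergman_proj \<nu> (\<lambda>z. f z * u z + c * (f z * v z))"
    by (simp add: toeplitz_def algebra_simps)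
  then show ?thesis
    by (simp add: bergman_proj_add_mult[OF growth] toeplitz_def)
qed

lemma toeplitz_funpow_add_mult:
  assumes "poly_growth \<nu> u" "poly_growth \<nu> v"
  shows "(toeplitz \<nu> f ^^ n) (\<lambda>z. u z + c * v z) = (\<lambda>x. (toeplitz \<nu> f ^^ n) u x + c * (toeplitz \<nu> f ^^ n) v x)"
proof (induction n)
  case (Suc n)
  then show ?case
    using toeplitz_add_mult[OF poly_growth_toeplitz_funpow[OF assms(1)] poly_growth_toeplitz_funpow[OF assms(2)]]
    by simp
qed simp

lemma toeplitz_Knu:
  "toeplitz \<nu> f (\<lambda>z. Knu \<nu> z w) = (\<lambda>x. bergman_proj \<nu> (\<lambda>z. (f z - f w) * Knu \<nu> z w) x + f w * Knu \<nu> x w)"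
proof -
  have "toeplitz \<nu> f (\<lambda>z. Knu \<nu> z w) = bergman_proj \<nu> (\<lambda>z. (f z - f w) * Knu \<nu> z w + f w * Knu \<nu> z w)"
    unfolding toeplitz_def by (simp add: algebra_simps)
  also have "\<dots> = (\<lambda>x. bergman_proj \<nu> (\<lambda>z. (f z - f w) * Knu \<nu> z w) x + f w * Knu \<nu> x w)"
    unfolding bergman_proj_add_mult[OF poly_growth_oscillation_mult[OF poly_growth_Knu] poly_growth_Knu]
      bergman_proj_Knu ..
  finally show ?thesis .
qed

lemma iota_norm2_toeplitz_le:
  assumes "poly_growth \<nu> h"
  shows "iota_norm2 \<nu> (toeplitz \<nu> f h) \<le> M\<^sup>2 * iota_norm2 \<nu> h"
proof -
  have growth: "poly_growth \<nu> (\<lambda>z. f z * h z)"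
    by (rule poly_growth_mult_bounded[OF assms f_measurable f_bounded])
  have "(cmod (f z * h z))\<^sup>2 * iota_dens \<nu> z \<le> M\<^sup>2 * ((cmod (h z))\<^sup>2 * iota_dens \<nu> z)" for z
  proof -
    have "(cmod (f z))\<^sup>2 \<le> M\<^sup>2"
      by (rule power_mono[OF f_bounded norm_ge_zero])
    then show ?thesis
      using mult_right_mono[of _ _ "(cmod (h z))\<^sup>2 * iota_dens \<nu> z"] iota_dens_nonneg[of \<nu> z]
      by (simp add: norm_mult power_mult_distrib mult.assoc)
  qed
  then have "iota_norm2 \<nu> (\<lambda>z. f z * h z) \<le> M\<^sup>2 * iota_norm2 \<nu> h"
    using integrable_iota_norm_mult[OF growth growth] integrable_iota_norm_mult[OF assms assms]
    unfolding iota_norm2_def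
    by (subst integral_mult_right_zero[symmetric], intro integral_mono)
      (auto simp: power2_eq_square)
  then show ?thesis
    using iota_norm2_bergman_proj_le[OF growth] by (simp add: toeplitz_def)
qed

lemma iota_norm2_toeplitz_funpow_le:
  assumes "poly_growth \<nu> h"
  shows "iota_norm2 \<nu> ((toeplitz \<nu> f ^^ n) h) \<le> M ^ (2 * n) * iota_norm2 \<nu> h"
proof (induction n)
  case (Suc n)
  have "iota_norm2 \<nu> ((toeplitz \<nu> f ^^ Suc n) h) \<le> M\<^sup>2 * iota_norm2 \<nu> ((toeplitz \<nu> f ^^ n) h)"
    using iota_norm2_toeplitz_le[OF poly_growth_toeplitz_funpow[OF assms]] by simp
  also have "\<dots> \<le> M\<^sup>2 * (M ^ (2 * n) * iota_norm2 \<nu> h)"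
    by (intro mult_left_mono Suc.IH) auto
  finally show ?case
    by (simp add: power_mult power2_eq_square mult.assoc)
qed simp

lemma toeplitz_funpow_bergman_proj_eq_poly_upto:
  assumes "poly_growth \<nu> g"
  obtains a where "(toeplitz \<nu> f ^^ n) (bergman_proj \<nu> g) = poly_upto \<nu> a"
proof (cases n)
  case 0
  then show ?thesis
    using that bergman_proj_eq_poly_upto[OF assms] by auto
next
  case (Suc m)
  have "poly_growth \<nu> (\<lambda>z. f z * (toeplitz \<nu> f ^^ m) (bergman_proj \<nu> g) z)"
    by (intro poly_growth_mult_bounded[OF _ f_measurable f_bounded] poly_growth_toeplitz_funpow
        poly_growth_bergman_proj assms)
  then show ?thesis
    using that bergman_proj_eq_poly_upto Suc by (auto simp: toeplitz_def)
qed

text \<open>Values of elements of \<open>H\<^sub>\<nu>\<close> are inner products with the reproducing kernel, so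
  Cauchy--Schwarz and \<open>\<parallel>K\<^sub>w\<parallel>\<^sup>2 = (1 + |w|\<^sup>2)\<^sup>\<nu>\<close> bound them pointwise.\<close>

lemma norm_toeplitz_funpow_bergman_proj_le:
  assumes "poly_growth \<nu> g"
  shows "cmod ((toeplitz \<nu> f ^^ n) (bergman_proj \<nu> g) w) \<le> M ^ n * sqrt (iota_norm2 \<nu> g * bracket w ^ \<nu>)"
proof -
  define p where "p = (toeplitz \<nu> f ^^ n) (bergman_proj \<nu> g)"
  obtain a where a: "p = poly_upto \<nu> a"
    using toeplitz_funpow_bergman_proj_eq_poly_upto[OF assms] unfolding p_def by blast
  have growth: "poly_growth \<nu> p"
    unfolding p_def by (intro poly_growth_toeplitz_funpow poly_growth_bergman_proj assms)
  have "p w = iota_inner \<nu> p (\<lambda>z. Knu \<nu> z w)"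
    using bergman_proj_poly_upto[of \<nu> a] by (simp add: a bergman_proj_def fun_eq_iff)
  then have "(cmod (p w))\<^sup>2 \<le> iota_norm2 \<nu> p * bracket w ^ \<nu>"
    using norm_iota_inner_le[OF growth poly_growth_Knu] by (simp add: iota_norm2_Knu)
  also have "\<dots> \<le> (M ^ (2 * n) * iota_norm2 \<nu> g) * bracket w ^ \<nu>"
  proof -
    have "iota_norm2 \<nu> p \<le> M ^ (2 * n) * iota_norm2 \<nu> g"
      unfolding p_def
      by (rule order_trans[OF iota_norm2_toeplitz_funpow_le[OF poly_growth_bergman_proj[OF assms]]
            mult_left_mono[OF iota_norm2_bergman_proj_le[OF assms]]])
        (simp add: bound_nonneg)
    then show ?thesis
      using bracket_pos[of w] by (simp add: mult_right_mono)
  qed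
  also have "\<dots> = (M ^ n)\<^sup>2 * (iota_norm2 \<nu> g * bracket w ^ \<nu>)"
    by (simp add: power_mult[symmetric] mult_ac)
  finally have "cmod (p w) \<le> sqrt ((M ^ n)\<^sup>2 * (iota_norm2 \<nu> g * bracket w ^ \<nu>))"
    by (rule real_le_rsqrt)
  then show ?thesis
    using bound_nonneg by (simp add: p_def real_sqrt_mult)
qed

text \<open>With \<open>g = (f - f(w)) K\<^sub>w\<close>, \<open>toeplitz_Knu\<close> gives
  \<open>T\<^sup>n\<^sup>+\<^sup>1 K\<^sub>w - f(w)\<^sup>n\<^sup>+\<^sup>1 K\<^sub>w = T\<^sup>n P\<^sub>\<nu> g + f(w) (T\<^sup>n K\<^sub>w - f(w)\<^sup>n K\<^sub>w)\<close>, so the error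
  telescopes into the values at \<open>w\<close> of the \<open>n\<close> functions \<open>T\<^sup>k P\<^sub>\<nu> g \<in> H\<^sub>\<nu>\<close>.\<close>

lemma norm_toeplitz_funpow_Knu_diag_error_le:
  assumes "M \<ge> 1"
  shows "cmod ((toeplitz \<nu> f ^^ n) (\<lambda>z. Knu \<nu> z w) w - f w ^ n * Knu \<nu> w w)
     \<le> real n * M ^ n * sqrt (iota_norm2 \<nu> (\<lambda>z. (f z - f w) * Knu \<nu> z w) * bracket w ^ \<nu>)"
proof -
  define h where "h = (\<lambda>z. Knu \<nu> z w)"
  define g where "g = (\<lambda>z. (f z - f w) * h z)"
  define S where "S = sqrt (iota_norm2 \<nu> g * bracket w ^ \<nu>)"
  have h: "poly_growth \<nu> h"
    unfolding h_def by (rule poly_growth_Knu)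
  have g: "poly_growth \<nu> g"
    unfolding g_def by (rule poly_growth_oscillation_mult[OF h])
  have toeplitz_h: "toeplitz \<nu> f h = (\<lambda>x. bergman_proj \<nu> g x + f w * h x)"
    unfolding g_def h_def by (rule toeplitz_Knu)
  have S_nonneg: "S \<ge> 0"
    unfolding S_def using iota_norm2_nonneg bracket_pos[of w] by simp
  have "cmod ((toeplitz \<nu> f ^^ n) h w - f w ^ n * h w) \<le> real n * M ^ n * S"
  proof (induction n)
    case (Suc n)
    have "(toeplitz \<nu> f ^^ Suc n) h = (toeplitz \<nu> f ^^ n) (toeplitz \<nu> f h)"
      by (simp only: funpow_Suc_right comp_def)
    also have "\<dots> = (\<lambda>x. (toeplitz \<nu> f ^^ n) (bergman_proj \<nu> g) x + f w * (toeplitz \<nu> f ^^ n) h x)"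
      unfolding toeplitz_h by (rule toeplitz_funpow_add_mult[OF poly_growth_bergman_proj[OF g] h])
    finally have "(toeplitz \<nu> f ^^ Suc n) h w - f w ^ Suc n * h w
        = (toeplitz \<nu> f ^^ n) (bergman_proj \<nu> g) w + f w * ((toeplitz \<nu> f ^^ n) h w - f w ^ n * h w)"
      by (simp add: algebra_simps)
    then have "cmod ((toeplitz \<nu> f ^^ Suc n) h w - f w ^ Suc n * h w)
        \<le> cmod ((toeplitz \<nu> f ^^ n) (bergman_proj \<nu> g) w) + cmod (f w) * cmod ((toeplitz \<nu> f ^^ n) h w - f w ^ n * h w)"
      by (metis norm_mult norm_triangle_ineq)
    also have "\<dots> \<le> M ^ n * S + M * (real n * M ^ n * S)"
      using norm_toeplitz_funpow_bergman_proj_le[OF g, of n w] Suc.IH f_bounded[of w] bound_nonneg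
      unfolding S_def by (intro add_mono mult_mono) auto
    also have "\<dots> \<le> M ^ Suc n * S + M * (real n * M ^ n * S)"
      using S_nonneg assms by (intro add_mono mult_right_mono power_increasing) auto
    also have "\<dots> = real (Suc n) * M ^ Suc n * S"
      by (simp add: algebra_simps)
    finally show ?case .
  qed simp
  then show ?thesis
    unfolding h_def g_def S_def .
qed

text \<open>Where \<open>z\<close> is chordally close to \<open>w\<close> the oscillation of \<open>f\<close> is small; elsewhere
  \<open>|K\<^sub>w(z)|\<^sup>2 \<le> ((1 - \<delta>) (1 + |z|\<^sup>2) (1 + |w|\<^sup>2))\<^sup>\<nu>\<close> is exponentially small against
  \<open>\<parallel>K\<^sub>w\<parallel>\<^sup>2 = (1 + |w|\<^sup>2)\<^sup>\<nu>\<close>.\<close>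

lemma oscillation_Knu_sq_le:
  assumes "\<delta> \<le> 1" "e \<ge> 0"
    and close: "(cmod (z - w))\<^sup>2 < \<delta> * (bracket z * bracket w) \<Longrightarrow> cmod (f z - f w) < e"
  shows "(cmod ((f z - f w) * Knu \<nu> z w))\<^sup>2
    \<le> e\<^sup>2 * (cmod (Knu \<nu> z w))\<^sup>2 + 4 * M\<^sup>2 * (1 - \<delta>) ^ \<nu> * bracket w ^ \<nu> * bracket z ^ \<nu>"
proof -
  define A where "A = (cmod (1 + z * cnj w))\<^sup>2"
  define P where "P = 4 * M\<^sup>2 * (1 - \<delta>) ^ \<nu> * bracket w ^ \<nu> * bracket z ^ \<nu>"
  have Knu_sq: "(cmod (Knu \<nu> z w))\<^sup>2 = A ^ \<nu>"
    by (simp add: Knu_def A_def norm_power power_mult[symmetric] mult.commute)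
  have "A \<ge> 0" "P \<ge> 0"
    using assms(1) bracket_pos[of z] bracket_pos[of w] by (simp_all add: A_def P_def)
  have "(cmod (f z - f w))\<^sup>2 * A ^ \<nu> \<le> e\<^sup>2 * A ^ \<nu> + P"
  proof (cases "(cmod (z - w))\<^sup>2 < \<delta> * (bracket z * bracket w)")
    case True
    then have "(cmod (f z - f w))\<^sup>2 * A ^ \<nu> \<le> e\<^sup>2 * A ^ \<nu>"
      using close[OF True] \<open>A \<ge> 0\<close> by (intro mult_right_mono power_mono) auto
    then show ?thesis
      using \<open>P \<ge> 0\<close> by linarith
  next
    case False
    have "A = bracket z * bracket w - (cmod (z - w))\<^sup>2"
      using norm_one_plus_mult_cnj_sq[of z w] by (simp add: A_def)
    also have "\<dots> \<le> (1 - \<delta>) * (bracket z * bracket w)"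
      using False by (simp add: algebra_simps)
    finally have "A ^ \<nu> \<le> ((1 - \<delta>) * (bracket z * bracket w)) ^ \<nu>"
      using \<open>A \<ge> 0\<close> by (rule power_mono)
    moreover have "cmod (f z - f w) \<le> 2 * M"
      using norm_triangle_ineq4[of "f z" "f w"] f_bounded[of z] f_bounded[of w] by linarith
    then have "(cmod (f z - f w))\<^sup>2 \<le> (2 * M)\<^sup>2"
      by (rule power_mono) simp
    ultimately have "(cmod (f z - f w))\<^sup>2 * A ^ \<nu> \<le> (2 * M)\<^sup>2 * ((1 - \<delta>) * (bracket z * bracket w)) ^ \<nu>"
      using \<open>A \<ge> 0\<close> by (intro mult_mono) auto
    also have "\<dots> = P"
      by (simp add: P_def power_mult_distrib mult_ac)
    finally show ?thesis
      using \<open>A \<ge> 0\<close> by (simp add: add_increasing)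
  qed
  then show ?thesis
    by (simp add: norm_mult power_mult_distrib Knu_sq P_def)
qed

lemma iota_norm2_oscillation_Knu_le:
  assumes "\<delta> \<le> 1" "e \<ge> 0"
    and close: "\<And>z w. (cmod (z - w))\<^sup>2 < \<delta> * (bracket z * bracket w) \<Longrightarrow> cmod (f z - f w) < e"
  shows "iota_norm2 \<nu> (\<lambda>z. (f z - f w) * Knu \<nu> z w) \<le> bracket w ^ \<nu> * (e\<^sup>2 + 4 * M\<^sup>2 * (real \<nu> + 1) * (1 - \<delta>) ^ \<nu>)"
proof -
  define c where "c = 4 * M\<^sup>2 * (1 - \<delta>) ^ \<nu> * bracket w ^ \<nu>"
  have g: "poly_growth \<nu> (\<lambda>z. (f z - f w) * Knu \<nu> z w)"
    by (rule poly_growth_oscillation_mult[OF poly_growth_Knu])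
  have "iota_norm2 \<nu> (\<lambda>z. (f z - f w) * Knu \<nu> z w)
      \<le> (\<integral>z. e\<^sup>2 * ((cmod (Knu \<nu> z w))\<^sup>2 * iota_dens \<nu> z) + c * (bracket z ^ \<nu> * iota_dens \<nu> z) \<partial>lborel)"
    unfolding iota_norm2_def
  proof (rule integral_mono)
    show "integrable lborel (\<lambda>z. (cmod ((f z - f w) * Knu \<nu> z w))\<^sup>2 * iota_dens \<nu> z)"
      using integrable_iota_norm_mult[OF g g] by (simp add: power2_eq_square)
    show "integrable lborel (\<lambda>z. e\<^sup>2 * ((cmod (Knu \<nu> z w))\<^sup>2 * iota_dens \<nu> z) + c * (bracket z ^ \<nu> * iota_dens \<nu> z))"
      using integrable_iota_norm_mult[OF poly_growth_Knu poly_growth_Knu]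
      by (intro Bochner_Integration.integrable_add integrable_mult_right integrable_bracket_power_iota)
        (simp add: power2_eq_square)
    show "(cmod ((f z - f w) * Knu \<nu> z w))\<^sup>2 * iota_dens \<nu> z
        \<le> e\<^sup>2 * ((cmod (Knu \<nu> z w))\<^sup>2 * iota_dens \<nu> z) + c * (bracket z ^ \<nu> * iota_dens \<nu> z)" for z
    proof -
      have "(cmod ((f z - f w) * Knu \<nu> z w))\<^sup>2 \<le> e\<^sup>2 * (cmod (Knu \<nu> z w))\<^sup>2 + c * bracket z ^ \<nu>"
        using oscillation_Knu_sq_le[where z=z and w=w and \<nu>=\<nu>, OF assms(1,2) close]
        by (simp add: c_def mult_ac)
      from mult_right_mono[OF this iota_dens_nonneg[of \<nu> z]] show ?thesis
        by (simp add: algebra_simps)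
    qed
  qed
  also have "\<dots> = e\<^sup>2 * iota_norm2 \<nu> (\<lambda>z. Knu \<nu> z w) + c * (real \<nu> + 1)"
    using integrable_iota_norm_mult[OF poly_growth_Knu poly_growth_Knu, of \<nu> w]
    by (simp add: iota_norm2_def integrable_bracket_power_iota integral_bracket_power_iota power2_eq_square)
  also have "\<dots> = bracket w ^ \<nu> * (e\<^sup>2 + 4 * M\<^sup>2 * (real \<nu> + 1) * (1 - \<delta>) ^ \<nu>)"
    by (simp add: iota_norm2_Knu c_def algebra_simps)
  finally show ?thesis .
qed

theorem berezin_transform_error_le:
  assumes "M \<ge> 1" "\<delta> \<le> 1" "e \<ge> 0"
    and close: "\<And>z w. (cmod (z - w))\<^sup>2 < \<delta> * (bracket z * bracket w) \<Longrightarrow> cmod (f z - f w) < e"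
  shows "cmod ((of_nat \<nu> + 1) ^ n * Rnu \<nu> (Rnu_star \<nu> f ^^ n) z - f z ^ n)
    \<le> real n * M ^ n * sqrt (e\<^sup>2 + 4 * M\<^sup>2 * (real \<nu> + 1) * (1 - \<delta>) ^ \<nu>)"
proof -
  define N where "N = bracket z ^ \<nu>"
  define E where "E = e\<^sup>2 + 4 * M\<^sup>2 * (real \<nu> + 1) * (1 - \<delta>) ^ \<nu>"
  have "N > 0"
    using bracket_pos[of z] by (simp add: N_def)
  have "(of_nat \<nu> + 1 :: complex) \<noteq> 0"
    by (metis of_nat_Suc of_nat_eq_0_iff add.commute nat.simps(3))
  then have "(of_nat \<nu> + 1) ^ n * Rnu \<nu> (Rnu_star \<nu> f ^^ n) z
      = (toeplitz \<nu> f ^^ n) (\<lambda>w. Knu \<nu> w z) z / of_real N"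
    by (simp add: Rnu_eq_Knu_diag Rnu_star_funpow Knu_diag N_def)
  then have "(of_nat \<nu> + 1) ^ n * Rnu \<nu> (Rnu_star \<nu> f ^^ n) z - f z ^ n
      = ((toeplitz \<nu> f ^^ n) (\<lambda>w. Knu \<nu> w z) z - f z ^ n * Knu \<nu> z z) / of_real N"
    using bracket_pos[of z] by (simp add: Knu_diag N_def diff_divide_distrib)
  then have "cmod ((of_nat \<nu> + 1) ^ n * Rnu \<nu> (Rnu_star \<nu> f ^^ n) z - f z ^ n)
      = cmod ((toeplitz \<nu> f ^^ n) (\<lambda>w. Knu \<nu> w z) z - f z ^ n * Knu \<nu> z z) / N"
    using \<open>N > 0\<close> by (simp add: norm_divide)
  also have "\<dots> \<le> real n * M ^ n * sqrt (iota_norm2 \<nu> (\<lambda>w. (f w - f z) * Knu \<nu> w z) * N) / N"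
    using norm_toeplitz_funpow_Knu_diag_error_le[OF assms(1), where \<nu>=\<nu> and n=n and w=z] \<open>N > 0\<close>
    unfolding N_def by (simp add: divide_right_mono)
  also have "\<dots> \<le> real n * M ^ n * sqrt (N * E * N) / N"
    using iota_norm2_oscillation_Knu_le[OF assms(2,3) close, of \<nu> z] \<open>N > 0\<close> \<open>M \<ge> 1\<close>
    by (intro divide_right_mono mult_left_mono real_sqrt_le_mono mult_right_mono)
      (auto simp: N_def E_def)
  also have "sqrt (N * E * N) = sqrt (N * N) * sqrt E"
    by (metis mult.commute mult.left_commute real_sqrt_mult)
  also have "real n * M ^ n * (sqrt (N * N) * sqrt E) / N = real n * M ^ n * sqrt E"
    using \<open>N > 0\<close> by simp
  finally show ?thesis
    unfolding E_def .
qed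

end

section \<open>Continuous functions on the Riemann sphere\<close>

lemma cont_CP1_measurable: "cont_CP1 f \<Longrightarrow> f \<in> borel_measurable borel"
  by (auto simp: cont_CP1_def intro: borel_measurable_continuous_onI)

lemma cont_CP1_bounded:
  assumes "cont_CP1 f"
  obtains M where "M \<ge> 1" "\<And>z. cmod (f z) \<le> M"
proof -
  from assms obtain L where cont: "continuous_on UNIV f" and L: "(f \<longlongrightarrow> L) at_infinity"
    by (auto simp: cont_CP1_def)
  obtain R where R: "\<And>z. R \<le> norm z \<Longrightarrow> dist (f z) L < 1"
    using tendstoD[OF L zero_less_one] by (auto simp: eventually_at_infinity)
  have "compact (f ` cball 0 R)"
    by (rule compact_continuous_image) (use cont continuous_on_subset in auto)
  then obtain B where B: "\<And>y. y \<in> f ` cball 0 R \<Longrightarrow> norm y \<le> B"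
    using compact_imp_bounded bounded_iff by metis
  have "cmod (f z) \<le> max B (cmod L + 1)" for z
  proof (cases "norm z \<le> R")
    case True
    then have "cmod (f z) \<le> B"
      using B[of "f z"] by auto
    then show ?thesis
      by simp
  next
    case False
    then have "dist (f z) L < 1"
      using R by auto
    then show ?thesis
      using norm_triangle_ineq2[of "f z" L] by (simp add: dist_norm)
  qed
  moreover have "max B (cmod L + 1) \<ge> 1"
    by (simp add: le_max_iff_disj)
  ultimately show ?thesis
    using that by blast
qed

lemma chordally_close_imp_norm_less:
  assumes "R \<ge> 0" "cmod w \<le> R" "\<delta> \<le> 1 / (4 * (1 + R\<^sup>2))"
    and close: "(cmod (z - w))\<^sup>2 < \<delta> * (bracket z * bracket w)"
  shows "cmod z < 2 * R + 1"
proof (rule ccontr)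
  assume "\<not> cmod z < 2 * R + 1"
  then have "cmod z + 1 \<le> 2 * cmod (z - w)"
    using norm_triangle_ineq2[of z w] assms(2) by linarith
  then have far: "((cmod z + 1) / 2)\<^sup>2 \<le> (cmod (z - w))\<^sup>2"
    by (intro power_mono) auto
  define D where "D = 1 + R\<^sup>2"
  have "D > 0"
    by (simp add: D_def add_pos_nonneg)
  have "\<delta> * (bracket z * bracket w) \<le> 1 / (4 * D) * (bracket z * D)"
    using assms(1-3) bracket_pos[of z] bracket_pos[of w]
    by (intro mult_mono mult_left_mono) (auto simp: D_def bracket_def power_mono)
  also have "\<dots> = bracket z / 4"
    using \<open>D > 0\<close> by simp
  also have "\<dots> \<le> ((cmod z + 1) / 2)\<^sup>2"
    by (simp add: bracket_def power2_eq_square field_simps)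
  finally show False
    using close far by linarith
qed

lemma chordally_close_imp_norms_le:
  assumes "R \<ge> 0" "cmod z \<le> R \<or> cmod w \<le> R" "\<delta> \<le> 1 / (4 * (1 + R\<^sup>2))"
    and close: "(cmod (z - w))\<^sup>2 < \<delta> * (bracket z * bracket w)"
  shows "cmod z \<le> 2 * R + 1 \<and> cmod w \<le> 2 * R + 1"
proof -
  have "(cmod (w - z))\<^sup>2 < \<delta> * (bracket w * bracket z)"
    using close by (simp add: norm_minus_commute mult.commute)
  then show ?thesis
    using assms chordally_close_imp_norm_less[of R w \<delta> z] chordally_close_imp_norm_less[of R z \<delta> w]
    by linarith
qed

lemma chordally_close_imp_dist_less:
  assumes "bracket z \<le> Q" "bracket w \<le> Q" "d > 0" "0 < \<delta>" "\<delta> \<le> d\<^sup>2 / Q\<^sup>2"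
    and close: "(cmod (z - w))\<^sup>2 < \<delta> * (bracket z * bracket w)"
  shows "dist z w < d"
proof -
  have "Q > 0"
    using assms(1) bracket_pos[of z] by linarith
  have "\<delta> * (bracket z * bracket w) \<le> (d\<^sup>2 / Q\<^sup>2) * (Q * Q)"
    using assms bracket_pos[of z] bracket_pos[of w] by (intro mult_mono) auto
  also have "\<dots> = d\<^sup>2"
    using \<open>Q > 0\<close> by (simp add: power2_eq_square)
  finally have "(cmod (z - w))\<^sup>2 < d\<^sup>2"
    using close by linarith
  then show ?thesis
    using \<open>d > 0\<close> by (simp add: dist_norm power_less_imp_less_base)
qed

text \<open>\<open>|z - w|\<^sup>2 / ((1 + |z|\<^sup>2) (1 + |w|\<^sup>2))\<close> is the squared chordal distance, so this is
  uniform continuity of \<open>f\<close> on the Riemann sphere.\<close>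

lemma cont_CP1_chordally_uniformly_continuous:
  assumes "cont_CP1 f" "e > 0"
  obtains \<delta> where "0 < \<delta>" "\<delta> < 1"
    "\<And>z w. (cmod (z - w))\<^sup>2 < \<delta> * (bracket z * bracket w) \<Longrightarrow> cmod (f z - f w) < e"
proof -
  from assms obtain L where cont: "continuous_on UNIV f" and L: "(f \<longlongrightarrow> L) at_infinity"
    by (auto simp: cont_CP1_def)
  obtain R0 where R0: "\<And>z. R0 \<le> norm z \<Longrightarrow> dist (f z) L < e / 2"
    using tendstoD[OF L, of "e / 2"] assms(2) by (auto simp: eventually_at_infinity)
  define R where "R = max R0 1"
  define K where "K = cball (0::complex) (2 * R + 1)"
  have "uniformly_continuous_on K f"
    by (rule compact_uniformly_continuous) (use cont continuous_on_subset in \<open>auto simp: K_def\<close>)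
  then obtain d where "d > 0" and d: "\<And>x y. x \<in> K \<Longrightarrow> y \<in> K \<Longrightarrow> dist y x < d \<Longrightarrow> dist (f y) (f x) < e"
    unfolding uniformly_continuous_on_def using assms(2) by metis
  define Q where "Q = 1 + (2 * R + 1)\<^sup>2"
  define \<delta> where "\<delta> = min (1 / 2) (min (d\<^sup>2 / Q\<^sup>2) (1 / (4 * (1 + R\<^sup>2))))"
  have "R \<ge> 1" "Q \<ge> 1"
    by (simp_all add: R_def Q_def)
  have "\<delta> > 0" "\<delta> < 1"
    using \<open>d > 0\<close> \<open>Q \<ge> 1\<close> by (simp_all add: \<delta>_def add_pos_nonneg)
  have "cmod (f z - f w) < e" if close: "(cmod (z - w))\<^sup>2 < \<delta> * (bracket z * bracket w)" for z w
  proof (cases "R \<le> cmod z \<and> R \<le> cmod w")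
    case True
    then have "dist (f z) L < e / 2" "dist (f w) L < e / 2"
      using R0 by (auto simp: R_def)
    then show ?thesis
      using dist_triangle_half_l[of "f z" L e "f w"] by (simp add: dist_norm dist_commute)
  next
    case False
    have "cmod z \<le> 2 * R + 1 \<and> cmod w \<le> 2 * R + 1"
      using False \<open>R \<ge> 1\<close> close by (intro chordally_close_imp_norms_le) (auto simp: \<delta>_def)
    then have "z \<in> K" "w \<in> K" "bracket z \<le> Q" "bracket w \<le> Q"
      by (auto simp: K_def bracket_def Q_def intro!: power_mono)
    moreover have "dist z w < d"
      using \<open>d > 0\<close> \<open>\<delta> > 0\<close> close \<open>bracket z \<le> Q\<close> \<open>bracket w \<le> Q\<close>
      by (intro chordally_close_imp_dist_less) (auto simp: \<delta>_def)
    ultimately show ?thesis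
      using d by (simp add: dist_norm)
  qed
  then show ?thesis
    using that \<open>\<delta> > 0\<close> \<open>\<delta> < 1\<close> by blast
qed

lemma powser_times_Suc_n_limit_0:
  fixes x :: "'a::{real_normed_div_algebra,banach}"
  assumes "norm x < 1"
  shows "(\<lambda>n. (of_nat n + 1) * x ^ n) \<longlonglongrightarrow> 0"
proof -
  have "(\<lambda>n. of_nat n * x ^ n + x ^ n) \<longlonglongrightarrow> 0 + 0"
    using assms by (intro tendsto_add powser_times_n_limit_0 LIMSEQ_power_zero)
  then show ?thesis
    by (simp add: distrib_right)
qed

theorem mainTheorem8:
  fixes f :: "complex \<Rightarrow> complex" and n :: nat
  assumes "cont_CP1 f" and "n \<ge> 1"
  shows "uniform_limit UNIV
           (\<lambda>\<nu> z. (of_nat \<nu> + 1) ^ n * Rnu \<nu> ((Rnu_star \<nu> f) ^^ n) z - f z ^ n)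
           (\<lambda>z. 0) sequentially"
proof (rule uniform_limitI)
  fix \<epsilon> :: real
  assume "\<epsilon> > 0"
  obtain M where "M \<ge> 1" and f_bounded: "\<And>z. cmod (f z) \<le> M"
    using cont_CP1_bounded[OF assms(1)] by blast
  define C where "C = real n * M ^ n"
  define e where "e = \<epsilon> / (2 * C)"
  have "C > 0" "e > 0"
    using assms(2) \<open>M \<ge> 1\<close> \<open>\<epsilon> > 0\<close> by (simp_all add: C_def e_def)
  obtain \<delta> where \<delta>: "0 < \<delta>" "\<delta> < 1"
    and close: "\<And>z w. (cmod (z - w))\<^sup>2 < \<delta> * (bracket z * bracket w) \<Longrightarrow> cmod (f z - f w) < e"
    using cont_CP1_chordally_uniformly_continuous[OF assms(1) \<open>e > 0\<close>] by blast
  have "(\<lambda>\<nu>. C * sqrt (e\<^sup>2 + 4 * M\<^sup>2 * ((real \<nu> + 1) * (1 - \<delta>) ^ \<nu>)))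
      \<longlonglongrightarrow> C * sqrt (e\<^sup>2 + 4 * M\<^sup>2 * 0)"
    using \<delta> by (intro tendsto_intros powser_times_Suc_n_limit_0) auto
  then have "\<forall>\<^sub>F \<nu> in sequentially. C * sqrt (e\<^sup>2 + 4 * M\<^sup>2 * ((real \<nu> + 1) * (1 - \<delta>) ^ \<nu>)) < \<epsilon>"
    by (rule order_tendstoD) (use \<open>\<epsilon> > 0\<close> \<open>C > 0\<close> in \<open>simp add: e_def\<close>)
  then show "\<forall>\<^sub>F \<nu> in sequentially. \<forall>z\<in>UNIV.
      dist ((of_nat \<nu> + 1) ^ n * Rnu \<nu> ((Rnu_star \<nu> f) ^^ n) z - f z ^ n) 0 < \<epsilon>"
  proof eventually_elim
    case (elim \<nu>)
    show ?case
      using berezin_transform_error_le[where \<delta>=\<delta> and e=e and \<nu>=\<nu> and n=n,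
          OF cont_CP1_measurable[OF assms(1)] f_bounded \<open>M \<ge> 1\<close> _ _ close] elim \<delta> \<open>e > 0\<close>
      by (auto simp: dist_norm C_def mult.assoc intro: le_less_trans)
  qed
qed

end
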